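(* Let $t\in\{w,m\}$ index two types of individuals, with exogenous masses $\mu_w>0,\mu_m>0$, and let $r:=\mu_w/\mu_m$. For each type $t$, let $\Delta_t:=Y_{1t}-Y_{2t}$ (difference of random potential incomes in sectors 1 and 2) have cumulative distribution function $F_{\Delta_t}$, and let $h_t:(0,1)\to[0,\infty)$. Assume that for each $t$: $h_t$ is decreasing and continuously differentiable; $F_{\Delta_t}$ is continuously differentiable with a continuous inverse $F_{\Delta_t}^{-1}$; and $\mathbb P[\Delta_t>0]\in(0,1)$. Define the efficient compositions $r^e_t:=\mathbb P[\Delta_t>0]$, $t\in\{w,m\}$. If $r^e_w<r^e_m$, then there exists an equilibrium $(r_w^*,r_m^* )$ such that $r_w^*<r_w^e<r_m^e<r_m^*$. Moreover, there is no equilibrium $(r_w^*,r_m^* )$ such that $r_w^e<r_w^*<r_m^*<r_m^e$.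
   Context: For $x,y\in(0,1)$, $z>0$, define $g_t(x,y,z):=h_t\left(\frac{1}{1+z y/x}\right)-h_t\left(\frac{1}{1+z(1-y)/(1-x)}\right)$. A composition is a pair $(r_w,r_m)\in[0,1]^2$, $r_t$ being the share of type-$t$ individuals in sector 1. An equilibrium is a composition $(r_w^*,r_m^* )$ such that: (i) if $r_w^*\in(0,1)$ then $F_{\Delta_w}^{-1}(1-r_w^* )=g_w(r_w^*,r_m^*,1/r)$, and if $r_m^*\in(0,1)$ then $F_{\Delta_m}^{-1}(1-r_m^* )=g_m(r_m^*,r_w^*,r)$; (ii) if $r_w^*=0$, there is $\bar\delta>0$ such that for all $0<\delta<\bar\delta$, $F_{\Delta_w}^{-1}(1-\delta)\le g_w(\delta,r_m^*,1/r)$; (iii) if $r_m^*=1$, there is $\bar\delta>0$ such that for all $0<\delta<\bar\delta$, $F_{\Delta_m}^{-1}(\delta)\ge g_m(1-\delta,r_w^*,r)$; (iv) symmetrically, if $r_w^*=1$, there is $\bar\delta>0$ such that for all $0<\delta<\bar\delta$, $F_{\Delta_w}^{-1}(\delta)\ge g_w(1-\delta,r_m^*,1/r)$, and if $r_m^*=0$, there is $\bar\delta>0$ such that for all $0<\delta<\bar\delta$, $F_{\Delta_m}^{-1}(1-\delta)\le g_m(\delta,r_w^*,r)$. *)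

theory Defs
  imports "HOL-Probability.Probability"
begin

text \<open>Extension of h (defined on the open interval (0,1)) to the point 1 by its
  left limit; needed because g_t(x,y,z) is evaluated at y = 0 or y = 1 in the
  boundary equilibrium conditions, where one argument of h equals 1.\<close>
definition hext :: "(real \<Rightarrow> real) \<Rightarrow> real \<Rightarrow> real" where
  "hext h p = (if p < 1 then h p else Lim (at_left 1) h)"

definition gfun :: "(real \<Rightarrow> real) \<Rightarrow> real \<Rightarrow> real \<Rightarrow> real \<Rightarrow> real" where
  "gfun h x y z = hext h (1 / (1 + z * y / x)) - hext h (1 / (1 + z * (1 - y) / (1 - x)))"

definition cont_inverse_cdf :: "(real \<Rightarrow> real) \<Rightarrow> (real \<Rightarrow> real) \<Rightarrow> bool" where
  "cont_inverse_cdf F Finv \<longleftrightarrow>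
     continuous_on {0<..<1} Finv \<and>
     (\<forall>p\<in>{0<..<1}. F (Finv p) = p) \<and>
     (\<forall>x. 0 < F x \<and> F x < 1 \<longrightarrow> Finv (F x) = x)"

text \<open>Equilibrium composition (rw, rm); Fwinv, Fminv are the inverse cdfs of
  Delta_w, Delta_m, hw, hm the functions h_w, h_m, and r = mu_w / mu_m.\<close>
definition equilibrium ::
  "(real \<Rightarrow> real) \<Rightarrow> (real \<Rightarrow> real) \<Rightarrow> (real \<Rightarrow> real) \<Rightarrow> (real \<Rightarrow> real) \<Rightarrow> real \<Rightarrow> real \<Rightarrow> real \<Rightarrow> bool"
where
  "equilibrium Fwinv Fminv hw hm r rw rm \<longleftrightarrow>
     rw \<in> {0..1} \<and> rm \<in> {0..1} \<and>
     (0 < rw \<and> rw < 1 \<longrightarrow> Fwinv (1 - rw) = gfun hw rw rm (1 / r)) \<and>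
     (0 < rm \<and> rm < 1 \<longrightarrow> Fminv (1 - rm) = gfun hm rm rw r) \<and>
     (rw = 0 \<longrightarrow> (\<exists>db>0. \<forall>\<delta>. 0 < \<delta> \<and> \<delta> < db \<and> \<delta> < 1 \<longrightarrow>
                      Fwinv (1 - \<delta>) \<le> gfun hw \<delta> rm (1 / r))) \<and>
     (rm = 1 \<longrightarrow> (\<exists>db>0. \<forall>\<delta>. 0 < \<delta> \<and> \<delta> < db \<and> \<delta> < 1 \<longrightarrow>
                      Fminv \<delta> \<ge> gfun hm (1 - \<delta>) rw r)) \<and>
     (rw = 1 \<longrightarrow> (\<exists>db>0. \<forall>\<delta>. 0 < \<delta> \<and> \<delta> < db \<and> \<delta> < 1 \<longrightarrow>
                      Fwinv \<delta> \<ge> gfun hw (1 - \<delta>) rm (1 / r))) \<and>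
     (rm = 0 \<longrightarrow> (\<exists>db>0. \<forall>\<delta>. 0 < \<delta> \<and> \<delta> < db \<and> \<delta> < 1 \<longrightarrow>
                      Fminv (1 - \<delta>) \<le> gfun hm \<delta> rw r))"

end

(*
  Let e_t = P[Delta_t > 0] be the efficient shares. Then Finv_t (1 - e_t) = 0, and since h_t is
  decreasing, g_t(x, y, z) has the sign of y - x. For a share y >= e_m of the other type, the
  type-w condition Finv_w (1 - x) = g_w(x, y, 1/r) is violated at x = e_w with the left side
  smaller, so its largest root R_w(y) in (0, e_w], or 0 if there is none, is a best response
  of type w; symmetrically the smallest root R_m(x) in [e_m, 1), or 1, is one of type m.
  Because g_t increases in the other type's share, both responses are antitone, so R_w o R_m
  is a monotone self-map of [0, e_w]; Tarski's argument gives a fixed point X, and (X, R_m X)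
  is an equilibrium with X < e_w < e_m < R_m X.
  Conversely, in an equilibrium with e_w < r_w < r_m the left side Finv_w (1 - r_w) is
  negative while g_w(r_w, r_m, 1/r) is positive.
*)

theory Submission
  imports Defs
begin

lemma tendsto_Inf_at_left_antimono:
  fixes h :: "real \<Rightarrow> real"
  assumes "a < b" and anti: "antimono_on {a<..<b} h" and bdd: "bdd_below (h ` {a<..<b})"
  shows "(h \<longlongrightarrow> Inf (h ` {a<..<b})) (at_left b)"
proof (rule order_tendstoI)
  fix c assume "c < Inf (h ` {a<..<b})"
  then show "\<forall>\<^sub>F x in at_left b. c < h x"
    using eventually_at_left_real[OF \<open>a < b\<close>] cInf_lower[OF _ bdd]
    by (auto elim!: eventually_mono intro: less_le_trans)
next
  fix c assume "Inf (h ` {a<..<b}) < c"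
  then obtain p where p: "p \<in> {a<..<b}" "h p < c"
    using \<open>a < b\<close> by (subst (asm) cInf_less_iff) (auto simp: bdd)
  have "h x \<le> h p" if "x \<in> {p<..<b}" for x
    using monotone_onD[OF anti] p(1) that by simp
  then show "\<forall>\<^sub>F x in at_left b. h x < c"
    using eventually_at_left_real[of p b] p by (auto elim!: eventually_mono intro: le_less_trans)
qed

lemma mono_on_fixpoint:
  fixes T :: "'a::conditionally_complete_lattice \<Rightarrow> 'a"
  assumes "a \<le> b" and mono: "mono_on {a..b} T" and maps_to: "T ` {a..b} \<subseteq> {a..b}"
  obtains x where "x \<in> {a..b}" and "T x = x"
proof -
  define A where "A = {x\<in>{a..b}. x \<le> T x}"
  have "a \<in> A"
    using \<open>a \<le> b\<close> maps_to unfolding A_def by (auto simp: image_subset_iff)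
  have bdd: "bdd_above A"
    unfolding A_def by (auto intro!: bdd_aboveI[of _ b])
  have X: "Sup A \<in> {a..b}"
    using \<open>a \<in> A\<close> bdd by (auto intro: cSup_upper cSup_least simp: A_def)
  have TX: "T (Sup A) \<in> {a..b}"
    using X maps_to by blast
  have "Sup A \<le> T (Sup A)"
  proof (rule cSup_least)
    fix x assume "x \<in> A"
    then have "T x \<le> T (Sup A)"
      using X cSup_upper[OF _ bdd] by (intro mono_onD[OF mono]) (auto simp: A_def)
    then show "x \<le> T (Sup A)"
      using \<open>x \<in> A\<close> unfolding A_def by auto
  qed (use \<open>a \<in> A\<close> in auto)
  moreover have "T (Sup A) \<le> T (T (Sup A))"
    using mono_onD[OF mono X TX calculation] .
  then have "T (Sup A) \<le> Sup A"
    using TX bdd by (intro cSup_upper) (auto simp: A_def)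
  ultimately show ?thesis
    using that X by (auto intro: antisym)
qed

lemma antimono_on_pair_fixpoint:
  fixes u :: "'b::order \<Rightarrow> 'a::conditionally_complete_lattice" and v :: "'a \<Rightarrow> 'b"
  assumes "a \<le> b" and v: "antimono_on {a..b} v" "v ` {a..b} \<subseteq> {c..d}"
    and u: "antimono_on {c..d} u" "u ` {c..d} \<subseteq> {a..b}"
  obtains x where "x \<in> {a..b}" and "u (v x) = x"
proof (rule mono_on_fixpoint[of a b "u \<circ> v"])
  show "mono_on {a..b} (u \<circ> v)"
  proof (rule mono_onI)
    fix x x' assume "x \<in> {a..b}" "x' \<in> {a..b}" "x \<le> x'"
    then show "(u \<circ> v) x \<le> (u \<circ> v) x'"
      using v u by (auto intro!: monotone_onD[OF u(1)] monotone_onD[OF v(1)])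
  qed
qed (use assms in auto)

lemma Sup_nonneg_set_is_root:
  fixes f :: "real \<Rightarrow> real"
  assumes cont: "continuous_on {a<..b} f" and "f b < 0" and s: "s \<in> {a<..b}" "0 \<le> f s"
  defines "S \<equiv> {x\<in>{a<..b}. 0 \<le> f x}"
  shows "Sup S \<in> {a<..<b}" and "f (Sup S) = 0"
proof -
  have bdd: "bdd_above S" and "s \<in> S"
    using s unfolding S_def by (auto intro!: bdd_aboveI[of _ b])
  then have "s \<le> Sup S" "Sup S \<le> b"
    by (auto intro: cSup_upper cSup_least simp: S_def)
  have "closed {x\<in>{s..b}. 0 \<le> f x}"
    using s by (intro continuous_on_closed_Collect_le continuous_on_subset[OF cont]) auto
  then have "closed ({x\<in>{s..b}. 0 \<le> f x} \<union> {..s})"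
    by (simp add: closed_Un)
  moreover have "S \<subseteq> {x\<in>{s..b}. 0 \<le> f x} \<union> {..s}"
    unfolding S_def by auto
  ultimately have "Sup S \<in> {x\<in>{s..b}. 0 \<le> f x} \<union> {..s}"
    using closed_subset_contains_Sup \<open>s \<in> S\<close> bdd by blast
  then have nonneg: "0 \<le> f (Sup S)"
    using \<open>s \<le> Sup S\<close> s by (cases "Sup S = s") auto
  then have "Sup S < b"
    using \<open>Sup S \<le> b\<close> \<open>f b < 0\<close> by (cases "Sup S = b") auto
  then show "Sup S \<in> {a<..<b}"
    using \<open>s \<le> Sup S\<close> s by simp
  show "f (Sup S) = 0"
  proof (rule ccontr)
    assume "f (Sup S) \<noteq> 0"
    have "continuous_on {Sup S..b} f"
      using \<open>s \<le> Sup S\<close> s by (intro continuous_on_subset[OF cont]) auto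
    then obtain x where x: "Sup S \<le> x" "x \<le> b" "f x = 0"
      using IVT2'[of f b 0 "Sup S"] nonneg \<open>f b < 0\<close> \<open>Sup S < b\<close> by auto
    then have "x \<in> S"
      using \<open>s \<le> Sup S\<close> s unfolding S_def by auto
    then have "x = Sup S"
      using x(1) cSup_upper[OF _ bdd] by (blast intro: antisym)
    then show False
      using x(3) \<open>f (Sup S) \<noteq> 0\<close> by simp
  qed
qed

lemma greatest_root_response:
  fixes f :: "real \<Rightarrow> real"
  assumes "a < b" and "continuous_on {a<..b} f" and "f b < 0"
  defines "R \<equiv> Sup (insert a {x\<in>{a<..b}. 0 \<le> f x})"
  shows "R \<in> {a..<b}" and "a < R \<Longrightarrow> f R = 0" and "R = a \<Longrightarrow> \<forall>x\<in>{a<..b}. f x < 0"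
proof -
  let ?S = "{x\<in>{a<..b}. 0 \<le> f x}"
  have "R = a \<and> (\<forall>x\<in>{a<..b}. f x < 0) \<or> R \<in> {a<..<b} \<and> f R = 0"
  proof (cases "?S = {}")
    case True
    then have "\<forall>x\<in>{a<..b}. f x < 0"
      by force
    then show ?thesis
      unfolding R_def True by simp
  next
    case False
    then obtain s where "s \<in> {a<..b}" "0 \<le> f s"
      by auto
    note root = Sup_nonneg_set_is_root[OF assms(2,3) this]
    moreover have "bdd_above ?S"
      by (auto intro!: bdd_aboveI[of _ b])
    ultimately have "R = Sup ?S"
      unfolding R_def using False by (simp add: cSup_insert_If sup_absorb2)
    then show ?thesis
      using root by simp
  qed
  then show "R \<in> {a..<b}" "a < R \<Longrightarrow> f R = 0" "R = a \<Longrightarrow> \<forall>x\<in>{a<..b}. f x < 0"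
    using \<open>a < b\<close> by auto
qed

lemma least_root_response:
  fixes g :: "real \<Rightarrow> real"
  assumes "c < d" and "continuous_on {c..<d} g" and "0 < g c"
  defines "R \<equiv> Inf (insert d {y\<in>{c..<d}. g y \<le> 0})"
  shows "R \<in> {c<..d}" and "R < d \<Longrightarrow> g R = 0" and "R = d \<Longrightarrow> \<forall>y\<in>{c..<d}. 0 < g y"
proof -
  define R' where "R' = Sup (insert (-d) {x\<in>{-d<..-c}. 0 \<le> - g (- x)})"
  have "continuous_on {-d<..-c} (\<lambda>x. - g (- x))"
    by (intro continuous_intros continuous_on_compose2[OF assms(2)]) auto
  note R' = greatest_root_response[of "-d" "-c" "\<lambda>x. - g (- x)", folded R'_def, OF _ this]
  have "x \<in> uminus ` A \<longleftrightarrow> - x \<in> A" for x :: real and A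
    by (metis image_iff minus_minus)
  then have "uminus ` insert d {y\<in>{c..<d}. g y \<le> 0} = insert (-d) {x\<in>{-d<..-c}. 0 \<le> - g (- x)}"
    by auto
  then have R: "R = - R'"
    unfolding R_def R'_def Inf_real_def by simp
  show "R \<in> {c<..d}" "R < d \<Longrightarrow> g R = 0"
    using R R' assms(1,3) by auto
  show "\<forall>y\<in>{c..<d}. 0 < g y" if "R = d"
  proof
    fix y assume "y \<in> {c..<d}"
    then show "0 < g y"
      using R'(3)[THEN bspec, of "- y"] R that assms(1,3) by auto
  qed
qed

lemma mutual_root_responses:
  fixes f g :: "real \<Rightarrow> real \<Rightarrow> real"
  assumes "a < b" and "c < d"
    and f_cont: "\<And>y. y \<in> {c..d} \<Longrightarrow> continuous_on {a<..b} (\<lambda>x. f x y)"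
    and g_cont: "\<And>x. x \<in> {a..b} \<Longrightarrow> continuous_on {c..<d} (g x)"
    and f_b: "\<And>y. y \<in> {c..d} \<Longrightarrow> f b y < 0"
    and g_c: "\<And>x. x \<in> {a..b} \<Longrightarrow> 0 < g x c"
    and f_antimono: "\<And>x y y'. x \<in> {a<..b} \<Longrightarrow> c \<le> y \<Longrightarrow> y \<le> y' \<Longrightarrow> y' \<le> d \<Longrightarrow> f x y' \<le> f x y"
    and g_antimono: "\<And>x x' y. a \<le> x \<Longrightarrow> x \<le> x' \<Longrightarrow> x' \<le> b \<Longrightarrow> y \<in> {c..<d} \<Longrightarrow> g x' y \<le> g x y"
  obtains X Y where "X \<in> {a..<b}" and "Y \<in> {c<..d}"
    and "a < X \<Longrightarrow> f X Y = 0" and "X = a \<Longrightarrow> \<forall>x\<in>{a<..b}. f x Y < 0"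
    and "Y < d \<Longrightarrow> g X Y = 0" and "Y = d \<Longrightarrow> \<forall>y\<in>{c..<d}. 0 < g X y"
proof -
  define Rf where "Rf y = Sup (insert a {x\<in>{a<..b}. 0 \<le> f x y})" for y
  define Rg where "Rg x = Inf (insert d {y\<in>{c..<d}. g x y \<le> 0})" for x
  have Rf: "Rf y \<in> {a..<b}" "a < Rf y \<Longrightarrow> f (Rf y) y = 0" "Rf y = a \<Longrightarrow> \<forall>x\<in>{a<..b}. f x y < 0"
    if "y \<in> {c..d}" for y
    using greatest_root_response[OF \<open>a < b\<close> f_cont[OF that] f_b[OF that]] by (simp_all add: Rf_def)
  have Rg: "Rg x \<in> {c<..d}" "Rg x < d \<Longrightarrow> g x (Rg x) = 0" "Rg x = d \<Longrightarrow> \<forall>y\<in>{c..<d}. 0 < g x y"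
    if "x \<in> {a..b}" for x
    using least_root_response[OF \<open>c < d\<close> g_cont[OF that] g_c[OF that]] by (simp_all add: Rg_def)
  have Rf_antimono: "antimono_on {c..d} Rf"
  proof (rule monotone_onI)
    fix y y' assume y: "y \<in> {c..d}" "y' \<in> {c..d}" "y \<le> y'"
    have "0 \<le> f x y" if "x \<in> {a<..b}" "0 \<le> f x y'" for x
      using f_antimono[OF that(1)] y that(2) by force
    then show "Rf y' \<le> Rf y"
      unfolding Rf_def by (intro cSup_subset_mono) (auto intro!: bdd_aboveI[of _ b])
  qed
  have Rg_antimono: "antimono_on {a..b} Rg"
  proof (rule monotone_onI)
    fix x x' assume x: "x \<in> {a..b}" "x' \<in> {a..b}" "x \<le> x'"
    have "g x' y \<le> 0" if "y \<in> {c..<d}" "g x y \<le> 0" for y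
      using g_antimono[OF _ _ _ that(1)] x that(2) by force
    then show "Rg x' \<le> Rg x"
      unfolding Rg_def by (intro cInf_superset_mono) (auto intro!: bdd_belowI[of _ c])
  qed
  have "Rg ` {a..b} \<subseteq> {c..d}" "Rf ` {c..d} \<subseteq> {a..b}"
    using Rg(1) Rf(1) by force+
  then obtain X where X: "X \<in> {a..b}" "Rf (Rg X) = X"
    using antimono_on_pair_fixpoint[OF less_imp_le[OF \<open>a < b\<close>] Rg_antimono _ Rf_antimono] by blast
  show ?thesis
  proof (rule that[of X "Rg X"])
    show "Rg X \<in> {c<..d}" "Rg X < d \<Longrightarrow> g X (Rg X) = 0" "Rg X = d \<Longrightarrow> \<forall>y\<in>{c..<d}. 0 < g X y"
      using Rg[OF X(1)] by simp_all
    then have "Rg X \<in> {c..d}"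
      by simp
    then show "X \<in> {a..<b}" "a < X \<Longrightarrow> f X (Rg X) = 0" "X = a \<Longrightarrow> \<forall>x\<in>{a<..b}. f x (Rg X) < 0"
      using Rf[of "Rg X"] X(2) by simp_all
  qed
qed

lemma cdf_distr_zero:
  assumes "prob_space M" and "D \<in> borel_measurable M"
  shows "cdf (distr M borel D) 0 = 1 - measure M {\<omega>\<in>space M. D \<omega> > 0}"
proof -
  interpret prob_space M by fact
  have "cdf (distr M borel D) 0 = measure M (D -` {..0} \<inter> space M)"
    unfolding cdf_def using assms(2) by (simp add: measure_distr)
  also have "D -` {..0} \<inter> space M = space M - {\<omega>\<in>space M. D \<omega> > 0}"
    by auto
  also have "measure M \<dots> = 1 - measure M {\<omega>\<in>space M. D \<omega> > 0}"
    by (rule prob_compl) (use assms(2) in measurable)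
  finally show ?thesis .
qed

lemma mono_cdf_distr:
  assumes "prob_space M" and "D \<in> borel_measurable M"
  shows "mono (cdf (distr M borel D))"
proof -
  have "real_distribution (distr M borel D)"
    using assms by (simp add: prob_space.real_distribution_distr)
  then show ?thesis
    by (intro monoI) (rule finite_borel_measure.cdf_nondecreasing[OF real_distribution.finite_borel_measure_M])
qed

lemma cont_inverse_cdf_strict_mono_on:
  assumes "cont_inverse_cdf F Finv" and "mono F"
  shows "strict_mono_on {0<..<1} Finv"
proof (rule strict_mono_onI)
  fix p q :: real
  assume "p \<in> {0<..<1}" "q \<in> {0<..<1}" "p < q"
  moreover have "F (Finv p) = p" "F (Finv q) = q"
    using assms(1) \<open>p \<in> _\<close> \<open>q \<in> _\<close> unfolding cont_inverse_cdf_def by auto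
  ultimately show "Finv p < Finv q"
    using monoD[OF assms(2), of "Finv q" "Finv p"] by force
qed

lemma inverse_cdf_sign:
  assumes "prob_space M" and "D \<in> borel_measurable M"
    and Finv: "cont_inverse_cdf (cdf (distr M borel D)) Finv"
    and e: "e = measure M {\<omega>\<in>space M. D \<omega> > 0}" "0 < e" "e < 1"
  shows "Finv (1 - e) = 0" and "e < x \<Longrightarrow> x < 1 \<Longrightarrow> Finv (1 - x) < 0"
proof -
  have F0: "cdf (distr M borel D) 0 = 1 - e"
    using cdf_distr_zero[OF assms(1,2)] e(1) by simp
  with e(2,3) have "0 < cdf (distr M borel D) 0 \<and> cdf (distr M borel D) 0 < 1"
    by simp
  then have "Finv (cdf (distr M borel D) 0) = 0"
    using Finv unfolding cont_inverse_cdf_def by blast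
  with F0 show zero: "Finv (1 - e) = 0"
    by simp
  show "e < x \<Longrightarrow> x < 1 \<Longrightarrow> Finv (1 - x) < 0"
    using strict_mono_onD[OF cont_inverse_cdf_strict_mono_on[OF Finv mono_cdf_distr[OF assms(1,2)]],
        of "1 - x" "1 - e"] zero e(2) by simp
qed

locale nonneg_decreasing =
  fixes h :: "real \<Rightarrow> real"
  assumes nonneg: "\<forall>x\<in>{0<..<1}. h x \<ge> 0"
    and decreasing: "\<forall>x y. 0 < x \<and> x < y \<and> y < 1 \<longrightarrow> h y < h x"
begin

lemma hext_one: "hext h 1 = Inf (h ` {0<..<1})"
proof -
  have "antimono_on {0<..<1} h"
    using decreasing by (intro monotone_onI) (auto simp: le_less)
  moreover have "bdd_below (h ` {0<..<1})"
    using nonneg by (auto intro!: bdd_belowI[of _ 0])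
  ultimately show ?thesis
    unfolding hext_def using tendsto_Inf_at_left_antimono[of 0 1 h] by (simp add: tendsto_Lim)
qed

lemma hext_strict_antimono:
  assumes "0 < p" "p < q" "q \<le> 1"
  shows "hext h q < hext h p"
proof (cases "q < 1")
  case True
  then show ?thesis using assms decreasing unfolding hext_def by auto
next
  case False
  have "Inf (h ` {0<..<1}) \<le> h ((p + 1) / 2)"
    using assms nonneg by (intro cInf_lower bdd_belowI[of _ 0]) auto
  also have "\<dots> < h p"
    using assms decreasing by auto
  finally show ?thesis
    using False assms hext_one unfolding hext_def by auto
qed

lemma hext_share_strict_mono:
  assumes "0 \<le> s" "s < t"
  shows "hext h (1 / (1 + s)) < hext h (1 / (1 + t))"
  using assms by (intro hext_strict_antimono) (auto simp: divide_strict_left_mono)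

lemma hext_share_mono:
  assumes "0 \<le> s" "s \<le> t"
  shows "hext h (1 / (1 + s)) \<le> hext h (1 / (1 + t))"
  using hext_share_strict_mono[of s t] assms by (cases "s = t") auto

lemma continuous_on_hext_share:
  assumes "continuous_on {0<..<1} h"
  shows "continuous_on {0<..} (\<lambda>t. hext h (1 / (1 + t)))"
proof (rule continuous_on_cong[THEN iffD1])
  show "continuous_on {0<..} (\<lambda>t. h (1 / (1 + t)))"
    by (rule continuous_on_compose2[OF assms]) (auto intro!: continuous_intros)
qed (auto simp: hext_def)

lemma gfun_pos:
  assumes "0 < x" "x < y" "y \<le> 1" "0 < z"
  shows "0 < gfun h x y z"
proof -
  have "z * (1 - y) / (1 - x) < z * y / x"
    using assms by (simp add: field_simps mult_strict_left_mono)
  then show ?thesis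
    unfolding gfun_def using assms hext_share_strict_mono by simp
qed

lemma gfun_neg:
  assumes "0 \<le> y" "y < x" "x < 1" "0 < z"
  shows "gfun h x y z < 0"
proof -
  have "z * y / x < z * (1 - y) / (1 - x)"
    using assms by (simp add: field_simps mult_strict_left_mono)
  then show ?thesis
    unfolding gfun_def using assms hext_share_strict_mono by simp
qed

lemma gfun_mono:
  assumes "0 < x" "x < 1" "0 \<le> y" "y \<le> y'" "y' \<le> 1" "0 < z"
  shows "gfun h x y z \<le> gfun h x y' z"
proof -
  have "hext h (1 / (1 + z * y / x)) \<le> hext h (1 / (1 + z * y' / x))"
    using assms by (intro hext_share_mono) (auto simp: divide_right_mono)
  moreover have "hext h (1 / (1 + z * (1 - y') / (1 - x))) \<le> hext h (1 / (1 + z * (1 - y) / (1 - x)))"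
    using assms by (intro hext_share_mono) (auto simp: divide_right_mono)
  ultimately show ?thesis
    unfolding gfun_def by simp
qed

lemma continuous_on_gfun:
  assumes h: "continuous_on {0<..<1} h" and "0 \<le> y" "y \<le> 1" "0 < z"
  shows "continuous_on {0<..<1} (\<lambda>x. gfun h x y z)"
proof -
  have "continuous_on {0<..<1} (\<lambda>x. hext h (1 / (1 + z * y / x)))"
  proof (cases "y = 0")
    case False
    then show ?thesis using assms
      by (intro continuous_on_compose2[OF continuous_on_hext_share[OF h]]) (auto intro!: continuous_intros)
  qed simp
  moreover have "continuous_on {0<..<1} (\<lambda>x. hext h (1 / (1 + z * (1 - y) / (1 - x))))"
  proof (cases "y = 1")
    case False
    then show ?thesis using assms
      by (intro continuous_on_compose2[OF continuous_on_hext_share[OF h]]) (auto intro!: continuous_intros)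
  qed simp
  ultimately show ?thesis
    unfolding gfun_def by (rule continuous_on_diff)
qed

end

lemma equilibriumI:
  assumes "rw \<in> {0..<1}" and "rm \<in> {0<..1}" and "0 < bw" and "cm < 1"
    and "0 < rw \<Longrightarrow> Fwinv (1 - rw) = gfun hw rw rm (1 / r)"
    and "rw = 0 \<Longrightarrow> \<forall>x\<in>{0<..bw}. Fwinv (1 - x) < gfun hw x rm (1 / r)"
    and "rm < 1 \<Longrightarrow> Fminv (1 - rm) = gfun hm rm rw r"
    and "rm = 1 \<Longrightarrow> \<forall>y\<in>{cm..<1}. gfun hm y rw r < Fminv (1 - y)"
  shows "equilibrium Fwinv Fminv hw hm r rw rm"
  unfolding equilibrium_def
proof (intro conjI impI)
  show "\<exists>db>0. \<forall>\<delta>. 0 < \<delta> \<and> \<delta> < db \<and> \<delta> < 1 \<longrightarrow> Fwinv (1 - \<delta>) \<le> gfun hw \<delta> rm (1 / r)"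
    if "rw = 0"
  proof (intro exI[of _ bw] conjI allI impI)
    fix \<delta> :: real assume "0 < \<delta> \<and> \<delta> < bw \<and> \<delta> < 1"
    then show "Fwinv (1 - \<delta>) \<le> gfun hw \<delta> rm (1 / r)"
      using assms(6)[OF that, THEN bspec, of \<delta>] by simp
  qed (use assms(3) in simp)
  show "\<exists>db>0. \<forall>\<delta>. 0 < \<delta> \<and> \<delta> < db \<and> \<delta> < 1 \<longrightarrow> gfun hm (1 - \<delta>) rw r \<le> Fminv \<delta>"
    if "rm = 1"
  proof (intro exI[of _ "1 - cm"] conjI allI impI)
    fix \<delta> :: real assume "0 < \<delta> \<and> \<delta> < 1 - cm \<and> \<delta> < 1"
    then show "gfun hm (1 - \<delta>) rw r \<le> Fminv \<delta>"
      using assms(8)[OF that, THEN bspec, of "1 - \<delta>"] by simp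
  qed (use assms(4) in simp)
qed (use assms in auto)

lemma equilibrium_exists:
  assumes "nonneg_decreasing hw" and "nonneg_decreasing hm"
    and "continuous_on {0<..<1} hw" and "continuous_on {0<..<1} hm"
    and "continuous_on {0<..<1} Fwinv" and "continuous_on {0<..<1} Fminv"
    and "0 < ew" and "ew < em" and "em < 1" and "0 < r"
    and "Fwinv (1 - ew) = 0" and "Fminv (1 - em) = 0"
  shows "\<exists>rw rm. equilibrium Fwinv Fminv hw hm r rw rm \<and> rw < ew \<and> em < rm"
proof -
  interpret hw: nonneg_decreasing hw by fact
  interpret hm: nonneg_decreasing hm by fact
  have Fw: "continuous_on {0<..<1} (\<lambda>x. Fwinv (1 - x))"
    by (rule continuous_on_compose2[OF assms(5)]) (auto intro!: continuous_intros)
  have Fm: "continuous_on {0<..<1} (\<lambda>x. Fminv (1 - x))"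
    by (rule continuous_on_compose2[OF assms(6)]) (auto intro!: continuous_intros)
  obtain X Y where "X \<in> {0..<ew}" "Y \<in> {em<..1}"
    "0 < X \<Longrightarrow> Fwinv (1 - X) - gfun hw X Y (1 / r) = 0"
    "X = 0 \<Longrightarrow> \<forall>x\<in>{0<..ew}. Fwinv (1 - x) - gfun hw x Y (1 / r) < 0"
    "Y < 1 \<Longrightarrow> Fminv (1 - Y) - gfun hm Y X r = 0"
    "Y = 1 \<Longrightarrow> \<forall>y\<in>{em..<1}. 0 < Fminv (1 - y) - gfun hm y X r"
  proof (rule mutual_root_responses[of 0 ew em 1
        "\<lambda>x y. Fwinv (1 - x) - gfun hw x y (1 / r)" "\<lambda>x y. Fminv (1 - y) - gfun hm y x r"])
    show "continuous_on {0<..ew} (\<lambda>x. Fwinv (1 - x) - gfun hw x y (1 / r))" if "y \<in> {em..1}" for y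
      using that assms(7-10) by (intro continuous_on_subset[OF continuous_on_diff[OF Fw
            hw.continuous_on_gfun[OF assms(3)]]]) auto
    show "continuous_on {em..<1} (\<lambda>y. Fminv (1 - y) - gfun hm y x r)" if "x \<in> {0..ew}" for x
      using that assms(7-10) by (intro continuous_on_subset[OF continuous_on_diff[OF Fm
            hm.continuous_on_gfun[OF assms(4)]]]) auto
    show "Fwinv (1 - ew) - gfun hw ew y (1 / r) < 0" if "y \<in> {em..1}" for y
      using that assms(7-11) hw.gfun_pos[of ew y "1 / r"] by simp
    show "0 < Fminv (1 - em) - gfun hm em x r" if "x \<in> {0..ew}" for x
      using that assms(7-10,12) hm.gfun_neg[of x em r] by simp
    show "Fwinv (1 - x) - gfun hw x y' (1 / r) \<le> Fwinv (1 - x) - gfun hw x y (1 / r)"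
      if "x \<in> {0<..ew}" "em \<le> y" "y \<le> y'" "y' \<le> 1" for x y y'
      using that assms(7-10) hw.gfun_mono[of x y y' "1 / r"] by simp
    show "Fminv (1 - y) - gfun hm y x' r \<le> Fminv (1 - y) - gfun hm y x r"
      if "0 \<le> x" "x \<le> x'" "x' \<le> ew" "y \<in> {em..<1}" for x x' y
      using that assms(7-10) hm.gfun_mono[of y x x' r] by simp
  qed (use assms(7-9) in auto)
  then have "equilibrium Fwinv Fminv hw hm r X Y"
    using assms(7-9) by (intro equilibriumI[where bw = ew and cm = em]) auto
  then show ?thesis
    using \<open>X \<in> {0..<ew}\<close> \<open>Y \<in> {em<..1}\<close> by auto
qed

lemma no_equilibrium_above_efficient:
  assumes "nonneg_decreasing hw" and "0 \<le> ew" and "0 < r"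
    and "\<And>x. ew < x \<Longrightarrow> x < 1 \<Longrightarrow> Fwinv (1 - x) < 0"
  shows "\<not> (\<exists>rw rm. equilibrium Fwinv Fminv hw hm r rw rm \<and> ew < rw \<and> rw < rm)"
proof
  assume "\<exists>rw rm. equilibrium Fwinv Fminv hw hm r rw rm \<and> ew < rw \<and> rw < rm"
  then obtain rw rm where eq: "equilibrium Fwinv Fminv hw hm r rw rm" and "ew < rw" "rw < rm"
    by blast
  then have "0 < rw" "rw < 1" "rm \<le> 1"
    using \<open>0 \<le> ew\<close> unfolding equilibrium_def by auto
  then have "Fwinv (1 - rw) = gfun hw rw rm (1 / r)"
    using eq unfolding equilibrium_def by blast
  moreover have "0 < gfun hw rw rm (1 / r)"
    using nonneg_decreasing.gfun_pos[OF assms(1) \<open>0 < rw\<close> \<open>rw < rm\<close> \<open>rm \<le> 1\<close>] \<open>0 < r\<close> by simp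
  ultimately show False
    using assms(4)[OF \<open>ew < rw\<close> \<open>rw < 1\<close>] by simp
qed

theorem proposition2:
  fixes M :: "'a measure"
    and Dw Dm :: "'a \<Rightarrow> real"
    and hw hm Fwinv Fminv :: "real \<Rightarrow> real"
    and mu_w mu_m :: real
  assumes "prob_space M"
    and "Dw \<in> borel_measurable M" and "Dm \<in> borel_measurable M"
    and "mu_w > 0" and "mu_m > 0"
    and "\<forall>x\<in>{0<..<1}. hw x \<ge> 0" and "\<forall>x\<in>{0<..<1}. hm x \<ge> 0"
    and "\<forall>x y. 0 < x \<and> x < y \<and> y < 1 \<longrightarrow> hw y < hw x"
    and "\<forall>x y. 0 < x \<and> x < y \<and> y < 1 \<longrightarrow> hm y < hm x"
    and "hw C1_differentiable_on {0<..<1}" and "hm C1_differentiable_on {0<..<1}"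
    and "cdf (distr M borel Dw) C1_differentiable_on UNIV"
    and "cdf (distr M borel Dm) C1_differentiable_on UNIV"
    and "cont_inverse_cdf (cdf (distr M borel Dw)) Fwinv"
    and "cont_inverse_cdf (cdf (distr M borel Dm)) Fminv"
    and "measure M {\<omega>\<in>space M. Dw \<omega> > 0} \<in> {0<..<1}"
    and "measure M {\<omega>\<in>space M. Dm \<omega> > 0} \<in> {0<..<1}"
    and "measure M {\<omega>\<in>space M. Dw \<omega> > 0} < measure M {\<omega>\<in>space M. Dm \<omega> > 0}"
  shows "(\<exists>rw rm. equilibrium Fwinv Fminv hw hm (mu_w / mu_m) rw rm \<and>
                 rw < measure M {\<omega>\<in>space M. Dw \<omega> > 0} \<and>
                 measure M {\<omega>\<in>space M. Dm \<omega> > 0} < rm) \<and>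
         \<not> (\<exists>rw rm. equilibrium Fwinv Fminv hw hm (mu_w / mu_m) rw rm \<and>
                 measure M {\<omega>\<in>space M. Dw \<omega> > 0} < rw \<and> rw < rm \<and>
                 rm < measure M {\<omega>\<in>space M. Dm \<omega> > 0})"
proof -
  define ew where "ew = measure M {\<omega>\<in>space M. Dw \<omega> > 0}"
  define em where "em = measure M {\<omega>\<in>space M. Dm \<omega> > 0}"
  have e: "0 < ew" "ew < em" "em < 1" and r: "0 < mu_w / mu_m"
    using assms(4,5,16-18) unfolding ew_def em_def by auto
  note Fw = inverse_cdf_sign[OF assms(1,2,14) ew_def]
  note Fm = inverse_cdf_sign[OF assms(1,3,15) em_def]
  have h: "nonneg_decreasing hw" "nonneg_decreasing hm"
    using assms(6-9) by unfold_locales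
  have F_cont: "continuous_on {0<..<1} Fwinv" "continuous_on {0<..<1} Fminv"
    using assms(14,15) unfolding cont_inverse_cdf_def by auto
  have "\<exists>rw rm. equilibrium Fwinv Fminv hw hm (mu_w / mu_m) rw rm \<and> rw < ew \<and> em < rm"
    using e r Fw(1) Fm(1) by (intro equilibrium_exists[OF h C1_differentiable_imp_continuous_on
          C1_differentiable_imp_continuous_on F_cont]) (use assms(10,11) in auto)
  moreover have "\<not> (\<exists>rw rm. equilibrium Fwinv Fminv hw hm (mu_w / mu_m) rw rm \<and> ew < rw \<and> rw < rm)"
    using e r Fw(2) by (intro no_equilibrium_above_efficient[OF h(1)]) auto
  ultimately show ?thesis
    unfolding ew_def em_def by blast
qed

end
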